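(* In the setting described in the context, Seller's expected payoff is increasing in the informativeness of Seller's information structure: whenever $(X',\pi'^S)$ is more informative than $(X,\pi^S)$ in the sense of Blackwell, Seller's expected payoff under $(X',\pi'^S)$ is at least as large as under $(X,\pi^S)$.
   Context: Let $0<q_\ell<q_h<\infty$, $Q=[q_\ell,q_h]$, and let $c$ be a real number with $0<c<q_\ell$. Let $F$ be a probability distribution on $[0,1]$ with support $[0,1]$ admitting a twice continuously differentiable density $f:(0,1)\to\mathbb{R}_{>0}$. Define $r(v)=(1-F(v))/f(v)$ and $\psi(v)=v-r(v)$ on $(0,1)$, and assume $\psi'(v)>0$ whenever $\psi(v)>0$. For $q\in Q$, $p(q)$ is the unique maximizer over $p\in\mathbb{R}$ of $(p-c)\big(1-F(p/q)\big)$. Model: the quality $q$ is drawn from a prior $\mu\in\Delta(Q)$ with support $Q$; Buyer's type $v\sim F$ is independent of $q$. Seller's information structure is $(X,\pi^S)$, with $X$ a measurable signal space and $\pi^S:Q\to\Delta(X)$; on observing $x$ Seller forms the Bayesian posterior $\mu^S_x$, and $\mu^S$ denotes the distribution of Seller's posterior mean $\mathbb{E}_{\mu^S_x}[q]$. The distribution $\mu^B$ of Buyer's posterior means is assumed to equal $\mu^S$. Seller's expected payoff is $\mathbb{E}_{q\sim\mu^B}\big[(p(q)-c)\big(1-F(p(q)/q)\big)\big]$. *)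

theory Defs
  imports "HOL-Probability.Probability"
begin

definition profit :: "(real \<Rightarrow> real) \<Rightarrow> real \<Rightarrow> real \<Rightarrow> real \<Rightarrow> real" where
  "profit F c q p = (p - c) * (1 - F (p / q))"

definition opt_price :: "(real \<Rightarrow> real) \<Rightarrow> real \<Rightarrow> real \<Rightarrow> real" where
  "opt_price F c q = (THE p. \<forall>p'. profit F c q p' \<le> profit F c q p)"

definition hazard_inv :: "(real \<Rightarrow> real) \<Rightarrow> (real \<Rightarrow> real) \<Rightarrow> real \<Rightarrow> real" where
  "hazard_inv F f v = (1 - F v) / f v"

definition virt_val :: "(real \<Rightarrow> real) \<Rightarrow> (real \<Rightarrow> real) \<Rightarrow> real \<Rightarrow> real" where
  "virt_val F f v = v - hazard_inv F f v"

definition joint :: "real measure \<Rightarrow> 'x measure \<Rightarrow> (real \<Rightarrow> 'x measure) \<Rightarrow> (real \<times> 'x) measure" where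
  "joint mu SX K = mu \<bind> (\<lambda>q. distr (K q) (mu \<Otimes>\<^sub>M SX) (\<lambda>x. (q, x)))"

text \<open>Seller's posterior mean E[q | x], as the conditional expectation of the quality
  given the sigma-algebra generated by the signal.\<close>
definition post_mean :: "real measure \<Rightarrow> 'x measure \<Rightarrow> (real \<Rightarrow> 'x measure) \<Rightarrow> real \<times> 'x \<Rightarrow> real" where
  "post_mean mu SX K = real_cond_exp (joint mu SX K)
      (vimage_algebra (space (mu \<Otimes>\<^sub>M SX)) snd SX) fst"

definition post_mean_dist :: "real measure \<Rightarrow> 'x measure \<Rightarrow> (real \<Rightarrow> 'x measure) \<Rightarrow> real measure" where
  "post_mean_dist mu SX K = distr (joint mu SX K) borel (post_mean mu SX K)"

text \<open>Seller's expected payoff, with Buyer's posterior-mean distribution mu^B = mu^S.\<close>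
definition seller_payoff :: "(real \<Rightarrow> real) \<Rightarrow> real \<Rightarrow> real measure \<Rightarrow> 'x measure \<Rightarrow> (real \<Rightarrow> 'x measure) \<Rightarrow> real" where
  "seller_payoff F c mu SX K =
     (\<integral>q. profit F c q (opt_price F c q) \<partial>(post_mean_dist mu SX K))"

definition info_structure :: "real measure \<Rightarrow> 'x measure \<Rightarrow> (real \<Rightarrow> 'x measure) \<Rightarrow> bool" where
  "info_structure mu SX K \<longleftrightarrow> K \<in> measurable mu (prob_algebra SX)"

definition blackwell_more_informative ::
  "real set \<Rightarrow> 'y measure \<Rightarrow> (real \<Rightarrow> 'y measure) \<Rightarrow> 'x measure \<Rightarrow> (real \<Rightarrow> 'x measure) \<Rightarrow> bool" where
  "blackwell_more_informative Q SY K' SX K \<longleftrightarrow>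
     (\<exists>g. g \<in> measurable SY (prob_algebra SX) \<and> (\<forall>q\<in>Q. K q = K' q \<bind> g))"

end

theory Submission
  imports Defs
begin

text \<open>Writing p = q t, Seller's value at posterior mean q is the supremum over t in [0,1] of
  (q t - c)(1 - F t), a supremum of affine functions of q and hence convex. If the first
  structure is a garbling g of the second, draw x from g y on top of (q, y): then q, y, x form
  a Markov chain, and Seller's posterior mean given x is the conditional expectation, given x,
  of the posterior mean given y. Conditional Jensen for the convex value function finishes the
  proof.\<close>

definition max_profit :: "(real \<Rightarrow> real) \<Rightarrow> real \<Rightarrow> real \<Rightarrow> real" where
  "max_profit F c q = (SUP t\<in>{0..1}. (q * t - c) * (1 - F t))"

lemma bdd_above_profit_line:
  fixes F :: "real \<Rightarrow> real" and q c :: real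
  assumes "continuous_on {0..1} F"
  shows "bdd_above ((\<lambda>t. (q * t - c) * (1 - F t)) ` {0..1})"
proof -
  have "continuous_on {0..1} (\<lambda>t. (q * t - c) * (1 - F t))"
    using assms by (intro continuous_intros) auto
  then show ?thesis
    by (intro bounded_imp_bdd_above compact_imp_bounded compact_continuous_image) auto
qed

lemma max_profit_upper:
  fixes F :: "real \<Rightarrow> real"
  assumes "continuous_on {0..1} F" "t \<in> {0..1}"
  shows "(q * t - c) * (1 - F t) \<le> max_profit F c q"
  unfolding max_profit_def using assms by (intro cSUP_upper bdd_above_profit_line) auto

lemma convex_on_max_profit:
  assumes "continuous_on {0..1} F"
  shows "convex_on UNIV (max_profit F c)"
proof (rule convex_onI)
  fix x y u :: real
  assume u: "0 < u" "u < 1"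
  show "max_profit F c ((1 - u) *\<^sub>R x + u *\<^sub>R y) \<le> (1 - u) * max_profit F c x + u * max_profit F c y"
    unfolding max_profit_def[of F c "(1 - u) *\<^sub>R x + u *\<^sub>R y"]
  proof (rule cSUP_least)
    fix t :: real assume t: "t \<in> {0..1}"
    have "(((1 - u) *\<^sub>R x + u *\<^sub>R y) * t - c) * (1 - F t) =
        (1 - u) * ((x * t - c) * (1 - F t)) + u * ((y * t - c) * (1 - F t))"
      by (simp add: algebra_simps)
    also have "\<dots> \<le> (1 - u) * max_profit F c x + u * max_profit F c y"
      using u t assms by (intro add_mono mult_left_mono max_profit_upper) auto
    finally show "(((1 - u) *\<^sub>R x + u *\<^sub>R y) * t - c) * (1 - F t) \<le> \<dots>" .
  qed simp
qed simp

lemma continuous_on_max_profit: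
  assumes "continuous_on {0..1} F"
  shows "continuous_on UNIV (max_profit F c)"
  using convex_on_continuous[OF open_UNIV convex_on_max_profit[OF assms]] .

lemma profit_le_max_profit:
  assumes "continuous_on {0..1} F" and "F 0 = 0" and "F 1 = 1"
    and "\<And>x. x < 0 \<Longrightarrow> F x = 0" and "\<And>x. 1 < x \<Longrightarrow> F x = 1" and "0 < q"
  shows "profit F c q p \<le> max_profit F c q"
proof -
  define t where "t = p / q"
  have p: "p = q * t" using \<open>0 < q\<close> by (simp add: t_def)
  consider "t < 0" | "t \<in> {0..1}" | "1 < t" by fastforce
  then show ?thesis
  proof cases
    case 1
    then have "profit F c q p \<le> (q * 0 - c) * (1 - F 0)"
      using assms mult_pos_neg[OF \<open>0 < q\<close> 1] by (simp add: profit_def t_def[symmetric] p)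
    then show ?thesis using max_profit_upper[OF assms(1), of 0 q c] by simp
  next
    case 2
    then show ?thesis
      using max_profit_upper[OF assms(1) 2, of q c] \<open>0 < q\<close> by (simp add: profit_def t_def)
  next
    case 3
    then have "profit F c q p = (q * 1 - c) * (1 - F 1)"
      using assms by (simp add: profit_def t_def[symmetric])
    then show ?thesis using max_profit_upper[OF assms(1), of 1 q c] by simp
  qed
qed

lemma max_profit_le_profit_maximiser:
  assumes "\<forall>p'. profit F c q p' \<le> profit F c q p" and "0 < q"
  shows "max_profit F c q \<le> profit F c q p"
  unfolding max_profit_def
proof (rule cSUP_least)
  fix t :: real
  have "(q * t - c) * (1 - F t) = profit F c q (q * t)"
    using \<open>0 < q\<close> by (simp add: profit_def)
  then show "(q * t - c) * (1 - F t) \<le> profit F c q p" using assms(1) by simp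
qed simp

lemma profit_opt_price_eq_max_profit:
  assumes "continuous_on {0..1} F" and "F 0 = 0" and "F 1 = 1"
    and "\<And>x. x < 0 \<Longrightarrow> F x = 0" and "\<And>x. 1 < x \<Longrightarrow> F x = 1" and "0 < q"
    and "\<exists>!p. \<forall>p'. profit F c q p' \<le> profit F c q p"
  shows "profit F c q (opt_price F c q) = max_profit F c q"
proof -
  have "\<forall>p'. profit F c q p' \<le> profit F c q (opt_price F c q)"
    unfolding opt_price_def by (rule theI'[OF assms(7)])
  then show ?thesis
    using profit_le_max_profit[OF assms(1-6)] max_profit_le_profit_maximiser[OF _ assms(6)]
    by (simp add: antisym)
qed

lemma (in finite_measure) integrable_real_bounded:
  fixes f :: "'a \<Rightarrow> real"
  assumes "f \<in> borel_measurable M" and "\<And>x. x \<in> space M \<Longrightarrow> \<bar>f x\<bar> \<le> B"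
  shows "integrable M f"
  using assms by (intro integrable_const_bound[where B=B] AE_I2) auto

lemma (in sigma_finite_subalgebra) integral_convex_cond_exp_le:
  fixes X Y :: "'a \<Rightarrow> real" and W :: "real \<Rightarrow> real"
  assumes "integrable M X" and "AE x in M. real_cond_exp M F X x = Y x"
    and "convex_on UNIV W" and "W \<in> borel_measurable borel"
    and "integrable M (\<lambda>x. W (X x))" and "integrable M (\<lambda>x. W (Y x))"
  shows "(\<integral>x. W (Y x) \<partial>M) \<le> (\<integral>x. W (X x) \<partial>M)"
proof -
  have "AE x in M. W (real_cond_exp M F X x) \<le> real_cond_exp M F (\<lambda>x. W (X x)) x"
    using assms by (intro real_cond_exp_jensens_inequality(2)[where I=UNIV]) auto
  with assms(2) have "AE x in M. W (Y x) \<le> real_cond_exp M F (\<lambda>x. W (X x)) x"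
    by eventually_elim simp
  then have "(\<integral>x. W (Y x) \<partial>M) \<le> (\<integral>x. real_cond_exp M F (\<lambda>x. W (X x)) x \<partial>M)"
    using assms(5,6) by (intro integral_mono_AE) auto
  also have "\<dots> = (\<integral>x. W (X x) \<partial>M)"
    using assms(5) by (rule real_cond_exp_int(2))
  finally show ?thesis .
qed

lemma
  assumes "prob_space mu" and "K \<in> mu \<rightarrow>\<^sub>M prob_algebra S"
  shows sets_joint: "sets (joint mu S K) = sets (mu \<Otimes>\<^sub>M S)"
    and space_joint: "space (joint mu S K) = space (mu \<Otimes>\<^sub>M S)"
    and prob_space_joint: "prob_space (joint mu S K)"
proof -
  have mu: "mu \<in> space (prob_algebra mu)"
    using assms(1) by (simp add: space_prob_algebra)
  have "(\<lambda>q. distr (K q) (mu \<Otimes>\<^sub>M S) (\<lambda>x. (q, x))) \<in> mu \<rightarrow>\<^sub>M prob_algebra (mu \<Otimes>\<^sub>M S)"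
    using assms(2) by measurable
  note kernel = this
  show sets: "sets (joint mu S K) = sets (mu \<Otimes>\<^sub>M S)"
    unfolding joint_def by (rule sets_bind'[OF mu kernel])
  then show "space (joint mu S K) = space (mu \<Otimes>\<^sub>M S)"
    by (rule sets_eq_imp_space_eq)
  show "prob_space (joint mu S K)"
    unfolding joint_def by (rule prob_space_bind'[OF mu kernel])
qed

lemma sigma_finite_subalgebra_vimage_snd:
  assumes "prob_space P" and sets: "sets P = sets (A \<Otimes>\<^sub>M B)"
  shows "sigma_finite_subalgebra P (vimage_algebra (space (A \<Otimes>\<^sub>M B)) snd B)"
proof (rule finite_measure_subalgebra_is_sigma_finite)
  interpret prob_space P by fact
  have space: "space P = space (A \<Otimes>\<^sub>M B)"
    using sets by (rule sets_eq_imp_space_eq)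
  have "snd \<in> P \<rightarrow>\<^sub>M B"
    using measurable_snd by (subst measurable_cong_sets[OF sets refl])
  then have "subalgebra P (vimage_algebra (space (A \<Otimes>\<^sub>M B)) snd B)"
    unfolding subalgebra_def using sets_image_in_sets[OF space] space by simp
  then show "finite_measure_subalgebra P (vimage_algebra (space (A \<Otimes>\<^sub>M B)) snd B)"
    unfolding finite_measure_subalgebra_def finite_measure_subalgebra_axioms_def
    using finite_measure_axioms by simp
qed

lemma measurable_snd_vimage_snd: "snd \<in> vimage_algebra (space (A \<Otimes>\<^sub>M B)) snd B \<rightarrow>\<^sub>M B"
  by (rule measurable_vimage_algebra1) (auto simp: space_pair_measure)

lemma borel_measurable_fst_pair:
  assumes "(\<lambda>q. q) \<in> borel_measurable M"
  shows "fst \<in> borel_measurable (M \<Otimes>\<^sub>M S)"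
  using measurable_compose[OF measurable_fst assms, of S] by (simp add: comp_def)

lemma measurable_post_mean:
  assumes "prob_space mu" and "K \<in> mu \<rightarrow>\<^sub>M prob_algebra S"
  shows "post_mean mu S K \<in> borel_measurable (mu \<Otimes>\<^sub>M S)"
  unfolding post_mean_def
  by (subst measurable_cong_sets[OF sets_joint[OF assms, symmetric] refl]) (rule borel_measurable_cond_exp2)

lemma integral_comp_post_mean_cong_AE:
  assumes "prob_space mu" and "K \<in> mu \<rightarrow>\<^sub>M prob_algebra S"
    and "W \<in> borel_measurable borel" and "h \<in> borel_measurable (mu \<Otimes>\<^sub>M S)"
    and "AE z in joint mu S K. post_mean mu S K z = h z"
  shows "(\<integral>z. W (post_mean mu S K z) \<partial>joint mu S K) = (\<integral>z. W (h z) \<partial>joint mu S K)"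
  using assms(3-5) measurable_post_mean[OF assms(1,2)]
  by (intro integral_cong_AE) (auto simp: measurable_cong_sets[OF sets_joint[OF assms(1,2)] refl])

context
  fixes mu :: "real measure" and S :: "'x measure" and K :: "real \<Rightarrow> 'x measure" and a b :: real
  assumes mu: "prob_space mu" and K: "K \<in> mu \<rightarrow>\<^sub>M prob_algebra S"
    and id_measurable: "(\<lambda>q. q) \<in> borel_measurable mu" and space_mu: "space mu \<subseteq> {a..b}"
begin

lemma fst_joint_in_interval: "z \<in> space (joint mu S K) \<Longrightarrow> fst z \<in> {a..b}"
  using space_mu by (auto simp: space_joint[OF mu K] space_pair_measure)

lemma integrable_fst_joint: "integrable (joint mu S K) fst"
proof -
  interpret prob_space "joint mu S K" using mu K by (rule prob_space_joint)
  show ?thesis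
  proof (rule integrable_real_bounded)
    show "fst \<in> borel_measurable (joint mu S K)"
      using borel_measurable_fst_pair[OF id_measurable] by (subst measurable_cong_sets[OF sets_joint[OF mu K] refl])
    show "\<bar>fst z\<bar> \<le> \<bar>a\<bar> + \<bar>b\<bar>" if "z \<in> space (joint mu S K)" for z
      using fst_joint_in_interval[OF that] by auto
  qed
qed

lemma AE_post_mean_in_interval: "AE z in joint mu S K. post_mean mu S K z \<in> {a..b}"
proof -
  interpret sigma_finite_subalgebra "joint mu S K" "vimage_algebra (space (mu \<Otimes>\<^sub>M S)) snd S"
    using prob_space_joint[OF mu K] sets_joint[OF mu K] by (rule sigma_finite_subalgebra_vimage_snd)
  have "AE z in joint mu S K. a \<le> post_mean mu S K z"
    unfolding post_mean_def by (rule real_cond_exp_ge_c[OF integrable_fst_joint])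
      (use fst_joint_in_interval in \<open>auto intro!: AE_I2\<close>)
  moreover have "AE z in joint mu S K. post_mean mu S K z \<le> b"
    unfolding post_mean_def by (rule real_cond_exp_le_c[OF integrable_fst_joint])
      (use fst_joint_in_interval in \<open>auto intro!: AE_I2\<close>)
  ultimately show ?thesis by auto
qed

lemma integral_signal_times_post_mean:
  assumes "\<psi> \<in> borel_measurable S" and "\<And>y. y \<in> space S \<Longrightarrow> \<bar>\<psi> y\<bar> \<le> B"
  shows "(\<integral>z. \<psi> (snd z) * post_mean mu S K z \<partial>joint mu S K) = (\<integral>z. \<psi> (snd z) * fst z \<partial>joint mu S K)"
proof -
  interpret sigma_finite_subalgebra "joint mu S K" "vimage_algebra (space (mu \<Otimes>\<^sub>M S)) snd S"
    using prob_space_joint[OF mu K] sets_joint[OF mu K] by (rule sigma_finite_subalgebra_vimage_snd)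
  interpret prob_space "joint mu S K" using mu K by (rule prob_space_joint)
  have psi: "(\<lambda>z. \<psi> (snd z)) \<in> borel_measurable (vimage_algebra (space (mu \<Otimes>\<^sub>M S)) snd S)"
    using measurable_snd_vimage_snd assms(1) by (rule measurable_compose)
  have "integrable (joint mu S K) (\<lambda>z. \<psi> (snd z) * fst z)"
  proof (rule integrable_real_bounded)
    show "(\<lambda>z. \<psi> (snd z) * fst z) \<in> borel_measurable (joint mu S K)"
      using measurable_from_subalg[OF subalg psi] borel_measurable_integrable[OF integrable_fst_joint]
      by measurable
    show "\<bar>\<psi> (snd z) * fst z\<bar> \<le> B * (\<bar>a\<bar> + \<bar>b\<bar>)" if "z \<in> space (joint mu S K)" for z
    proof -
      have "snd z \<in> space S"
        using that by (auto simp: space_joint[OF mu K] space_pair_measure)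
      then have "\<bar>\<psi> (snd z)\<bar> \<le> B" by (rule assms(2))
      moreover have "\<bar>fst z\<bar> \<le> \<bar>a\<bar> + \<bar>b\<bar>"
        using fst_joint_in_interval[OF that] by auto
      ultimately show ?thesis
        unfolding abs_mult by (intro mult_mono) auto
    qed
  qed
  then show ?thesis
    unfolding post_mean_def
    by (rule real_cond_exp_intg(2)[OF _ psi borel_measurable_integrable[OF integrable_fst_joint]])
qed

text \<open>Clamping to [a,b] gives a version that is bounded everywhere, not just almost everywhere,
  as the integrals over the coupling below require.\<close>

lemma post_mean_bounded_version:
  obtains h where "h \<in> borel_measurable (vimage_algebra (space (mu \<Otimes>\<^sub>M S)) snd S)"
    and "h \<in> borel_measurable (mu \<Otimes>\<^sub>M S)" and "\<And>z. h z \<in> {a..b}"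
    and "AE z in joint mu S K. post_mean mu S K z = h z"
    and "\<And>\<psi> B. \<psi> \<in> borel_measurable S \<Longrightarrow> (\<And>y. y \<in> space S \<Longrightarrow> \<bar>\<psi> y\<bar> \<le> B) \<Longrightarrow>
           (\<integral>z. \<psi> (snd z) * h z \<partial>joint mu S K) = (\<integral>z. \<psi> (snd z) * fst z \<partial>joint mu S K)"
proof
  define h where "h z = max a (min b (post_mean mu S K z))" for z
  have "a \<le> b"
    using space_mu prob_space.not_empty[OF mu] by fastforce
  then show "h z \<in> {a..b}" for z
    by (simp add: h_def)
  show ae: "AE z in joint mu S K. post_mean mu S K z = h z"
    using AE_post_mean_in_interval by eventually_elim (simp add: h_def)
  show "h \<in> borel_measurable (vimage_algebra (space (mu \<Otimes>\<^sub>M S)) snd S)"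
    unfolding h_def post_mean_def by measurable
  show h: "h \<in> borel_measurable (mu \<Otimes>\<^sub>M S)"
    unfolding h_def using measurable_post_mean[OF mu K] by measurable
  fix \<psi> :: "'x \<Rightarrow> real" and B
  assume psi: "\<psi> \<in> borel_measurable S" and "\<And>y. y \<in> space S \<Longrightarrow> \<bar>\<psi> y\<bar> \<le> B"
  have "(\<integral>z. \<psi> (snd z) * h z \<partial>joint mu S K) = (\<integral>z. \<psi> (snd z) * post_mean mu S K z \<partial>joint mu S K)"
    using ae psi h measurable_post_mean[OF mu K]
    by (intro integral_cong_AE) (auto simp: measurable_cong_sets[OF sets_joint[OF mu K] refl])
  also have "\<dots> = (\<integral>z. \<psi> (snd z) * fst z \<partial>joint mu S K)"
    by (rule integral_signal_times_post_mean) fact+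
  finally show "(\<integral>z. \<psi> (snd z) * h z \<partial>joint mu S K) = (\<integral>z. \<psi> (snd z) * fst z \<partial>joint mu S K)" .
qed

end

locale garbling =
  fixes mu :: "real measure" and SX :: "'x measure" and SY :: "'y measure"
    and K :: "real \<Rightarrow> 'x measure" and K' :: "real \<Rightarrow> 'y measure" and g :: "'y \<Rightarrow> 'x measure"
  assumes prob_space_mu: "prob_space mu"
    and K_kernel: "K \<in> mu \<rightarrow>\<^sub>M prob_algebra SX"
    and K'_kernel: "K' \<in> mu \<rightarrow>\<^sub>M prob_algebra SY"
    and g_kernel: "g \<in> SY \<rightarrow>\<^sub>M prob_algebra SX"
    and K_eq_bind: "\<And>q. q \<in> space mu \<Longrightarrow> K q = K' q \<bind> g"
begin

lemmas [measurable] = K_kernel K'_kernel g_kernel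

abbreviation PX where "PX \<equiv> joint mu SX K"
abbreviation PY where "PY \<equiv> joint mu SY K'"

definition coupling :: "((real \<times> 'y) \<times> 'x) measure" where
  "coupling = PY \<bind> (\<lambda>z. distr (g (snd z)) ((mu \<Otimes>\<^sub>M SY) \<Otimes>\<^sub>M SX) (\<lambda>x. (z, x)))"

lemma garble_kernel:
  "(\<lambda>z. distr (g (snd z)) ((mu \<Otimes>\<^sub>M SY) \<Otimes>\<^sub>M SX) (\<lambda>x. (z, x)))
     \<in> PY \<rightarrow>\<^sub>M prob_algebra ((mu \<Otimes>\<^sub>M SY) \<Otimes>\<^sub>M SX)"
  by (subst measurable_cong_sets[OF sets_joint[OF prob_space_mu K'_kernel] refl]) measurable

lemma sets_coupling: "sets coupling = sets ((mu \<Otimes>\<^sub>M SY) \<Otimes>\<^sub>M SX)"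
  and prob_space_coupling: "prob_space coupling"
proof -
  have PY: "PY \<in> space (prob_algebra PY)"
    using prob_space_joint[OF prob_space_mu K'_kernel] by (simp add: space_prob_algebra)
  show "sets coupling = sets ((mu \<Otimes>\<^sub>M SY) \<Otimes>\<^sub>M SX)"
    unfolding coupling_def by (rule sets_bind'[OF PY garble_kernel])
  show "prob_space coupling"
    unfolding coupling_def by (rule prob_space_bind'[OF PY garble_kernel])
qed

lemma space_coupling: "space coupling = space ((mu \<Otimes>\<^sub>M SY) \<Otimes>\<^sub>M SX)"
  using sets_coupling by (rule sets_eq_imp_space_eq)

lemma garbled_signal_measure:
  assumes "z \<in> space (mu \<Otimes>\<^sub>M SY)"
  shows "sets (g (snd z)) = sets SX" and "prob_space (g (snd z))"
proof -
  have "g (snd z) \<in> space (prob_algebra SX)"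
    using assms by (intro measurable_space[OF g_kernel]) (auto simp: space_pair_measure)
  then show "sets (g (snd z)) = sets SX" and "prob_space (g (snd z))"
    by (auto simp: space_prob_algebra)
qed

lemma measurable_garble_pair:
  assumes "z \<in> space (mu \<Otimes>\<^sub>M SY)"
  shows "(\<lambda>x. (z, x)) \<in> g (snd z) \<rightarrow>\<^sub>M (mu \<Otimes>\<^sub>M SY) \<Otimes>\<^sub>M SX"
  using measurable_Pair1'[OF assms, of SX]
  by (subst measurable_cong_sets[OF garbled_signal_measure(1)[OF assms] refl])

lemma distr_coupling_fst: "distr coupling (mu \<Otimes>\<^sub>M SY) fst = PY"
proof -
  have "distr coupling (mu \<Otimes>\<^sub>M SY) fst = PY \<bind> return (mu \<Otimes>\<^sub>M SY)"
    unfolding coupling_def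
  proof (subst distr_bind[OF measurable_prob_algebraD[OF garble_kernel]])
    show "space PY \<noteq> {}"
      using prob_space_joint[OF prob_space_mu K'_kernel] by (rule prob_space.not_empty)
    show "PY \<bind> (\<lambda>z. distr (distr (g (snd z)) ((mu \<Otimes>\<^sub>M SY) \<Otimes>\<^sub>M SX) (\<lambda>x. (z, x))) (mu \<Otimes>\<^sub>M SY) fst)
        = PY \<bind> return (mu \<Otimes>\<^sub>M SY)"
    proof (rule bind_cong)
      fix z assume "z \<in> space PY"
      then have z: "z \<in> space (mu \<Otimes>\<^sub>M SY)"
        by (simp add: space_joint[OF prob_space_mu K'_kernel])
      have "distr (distr (g (snd z)) ((mu \<Otimes>\<^sub>M SY) \<Otimes>\<^sub>M SX) (\<lambda>x. (z, x))) (mu \<Otimes>\<^sub>M SY) fst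
          = distr (g (snd z)) (mu \<Otimes>\<^sub>M SY) (\<lambda>x. z)"
        by (subst distr_distr[OF _ measurable_garble_pair[OF z]]) (simp_all add: comp_def)
      also have "\<dots> = return (mu \<Otimes>\<^sub>M SY) z"
        by (rule prob_space.distr_const[OF garbled_signal_measure(2)[OF z] z])
      finally show "distr (distr (g (snd z)) ((mu \<Otimes>\<^sub>M SY) \<Otimes>\<^sub>M SX) (\<lambda>x. (z, x))) (mu \<Otimes>\<^sub>M SY) fst
          = return (mu \<Otimes>\<^sub>M SY) z" .
    qed simp
  qed simp
  also have "\<dots> = PY"
    by (rule bind_return''[OF sets_joint[OF prob_space_mu K'_kernel]])
  finally show ?thesis .
qed

lemma joint_kernel_bind_garbling:
  assumes q: "q \<in> space mu"
  shows "distr (K' q) (mu \<Otimes>\<^sub>M SY) (\<lambda>y. (q, y)) \<bind> (\<lambda>z. distr (g (snd z)) (mu \<Otimes>\<^sub>M SX) (\<lambda>x. (fst z, x)))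
    = distr (K q) (mu \<Otimes>\<^sub>M SX) (\<lambda>x. (q, x))"
proof -
  have H: "(\<lambda>z. distr (g (snd z)) (mu \<Otimes>\<^sub>M SX) (\<lambda>x. (fst z, x)))
      \<in> mu \<Otimes>\<^sub>M SY \<rightarrow>\<^sub>M prob_algebra (mu \<Otimes>\<^sub>M SX)"
    by measurable
  have K'q: "sets (K' q) = sets SY" "space (K' q) \<noteq> {}"
    using measurable_space[OF K'_kernel q] by (auto simp: space_prob_algebra dest: prob_space.not_empty)
  have "distr (K' q) (mu \<Otimes>\<^sub>M SY) (\<lambda>y. (q, y)) \<bind> (\<lambda>z. distr (g (snd z)) (mu \<Otimes>\<^sub>M SX) (\<lambda>x. (fst z, x)))
      = K' q \<bind> (\<lambda>y. distr (g y) (mu \<Otimes>\<^sub>M SX) (\<lambda>x. (q, x)))"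
    using measurable_Pair1'[OF q, of SY] K'q
    by (subst bind_distr[OF _ measurable_prob_algebraD[OF H]]) (simp_all cong: measurable_cong_sets)
  also have "\<dots> = distr (K' q \<bind> g) (mu \<Otimes>\<^sub>M SX) (\<lambda>x. (q, x))"
  proof (rule distr_bind[symmetric])
    show "g \<in> K' q \<rightarrow>\<^sub>M subprob_algebra SX"
      using measurable_prob_algebraD[OF g_kernel] by (simp add: measurable_cong_sets[OF K'q(1) refl])
  qed (use K'q measurable_Pair1'[OF q, of SX] in auto)
  finally show ?thesis
    by (simp add: K_eq_bind[OF q])
qed

lemma distr_coupling_quality_garbled_signal:
  "distr coupling (mu \<Otimes>\<^sub>M SX) (\<lambda>w. (fst (fst w), snd w)) = PX"
proof -
  define H where "H z = distr (g (snd z)) (mu \<Otimes>\<^sub>M SX) (\<lambda>x. (fst z, x))" for z :: "real \<times> 'y"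
  have H[measurable]: "H \<in> mu \<Otimes>\<^sub>M SY \<rightarrow>\<^sub>M prob_algebra (mu \<Otimes>\<^sub>M SX)"
    unfolding H_def by measurable
  have "distr coupling (mu \<Otimes>\<^sub>M SX) (\<lambda>w. (fst (fst w), snd w)) = PY \<bind> H"
    unfolding coupling_def
  proof (subst distr_bind[OF measurable_prob_algebraD[OF garble_kernel]])
    show "space PY \<noteq> {}"
      using prob_space_joint[OF prob_space_mu K'_kernel] by (rule prob_space.not_empty)
    show "PY \<bind> (\<lambda>z. distr (distr (g (snd z)) ((mu \<Otimes>\<^sub>M SY) \<Otimes>\<^sub>M SX) (\<lambda>x. (z, x)))
        (mu \<Otimes>\<^sub>M SX) (\<lambda>w. (fst (fst w), snd w))) = PY \<bind> H"
    proof (rule bind_cong)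
      fix z assume "z \<in> space PY"
      then have z: "z \<in> space (mu \<Otimes>\<^sub>M SY)"
        by (simp add: space_joint[OF prob_space_mu K'_kernel])
      show "distr (distr (g (snd z)) ((mu \<Otimes>\<^sub>M SY) \<Otimes>\<^sub>M SX) (\<lambda>x. (z, x)))
          (mu \<Otimes>\<^sub>M SX) (\<lambda>w. (fst (fst w), snd w)) = H z"
        by (subst distr_distr[OF _ measurable_garble_pair[OF z]]) (simp_all add: comp_def H_def)
    qed simp
  qed simp
  also have "\<dots> = mu \<bind> (\<lambda>q. distr (K' q) (mu \<Otimes>\<^sub>M SY) (\<lambda>y. (q, y)) \<bind> H)"
  proof -
    have "(\<lambda>q. distr (K' q) (mu \<Otimes>\<^sub>M SY) (\<lambda>y. (q, y))) \<in> mu \<rightarrow>\<^sub>M prob_algebra (mu \<Otimes>\<^sub>M SY)"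
      by measurable
    then show ?thesis
      unfolding joint_def by (rule bind_assoc[OF measurable_prob_algebraD measurable_prob_algebraD[OF H]])
  qed
  also have "\<dots> = PX"
    unfolding joint_def H_def using joint_kernel_bind_garbling by (intro bind_cong) simp_all
  finally show ?thesis .
qed

lemma integral_coupling_signal_event:
  assumes a[measurable]: "a \<in> borel_measurable (mu \<Otimes>\<^sub>M SY)"
    and bound: "\<And>z. z \<in> space (mu \<Otimes>\<^sub>M SY) \<Longrightarrow> \<bar>a z\<bar> \<le> C"
    and E[measurable]: "E \<in> sets SX"
  shows "(\<integral>w. indicator E (snd w) * a (fst w) \<partial>coupling) = (\<integral>z. a z * measure (g (snd z)) E \<partial>PY)"
proof -
  let ?N = "\<lambda>z. distr (g (snd z)) ((mu \<Otimes>\<^sub>M SY) \<Otimes>\<^sub>M SX) (\<lambda>x. (z, x))"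
  have "(\<integral>w. indicator E (snd w) * a (fst w) \<partial>coupling)
      = (\<integral>z. (\<integral>w. indicator E (snd w) * a (fst w) \<partial>?N z) \<partial>PY)"
    unfolding coupling_def
  proof (rule integral_bind[where B=C and B'=1])
    show "\<bar>indicator E (snd w) * a (fst w)\<bar> \<le> C" if "w \<in> space ((mu \<Otimes>\<^sub>M SY) \<Otimes>\<^sub>M SX)" for w
      using that bound[of "fst w"] by (auto simp: space_pair_measure indicator_def)
    show "finite_measure PY"
      using prob_space_joint[OF prob_space_mu K'_kernel] by (rule prob_space.finite_measure)
    show "AE z in PY. emeasure (?N z) (space (?N z)) \<le> ennreal 1"
    proof (rule AE_I2)
      fix z assume "z \<in> space PY"
      then have "prob_space (?N z)"
        using measurable_space[OF garble_kernel] by (simp add: space_prob_algebra)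
      then show "emeasure (?N z) (space (?N z)) \<le> ennreal 1"
        by (simp add: prob_space.emeasure_space_1 del: space_distr)
    qed
  qed (measurable, rule measurable_prob_algebraD[OF garble_kernel])
  also have "\<dots> = (\<integral>z. a z * measure (g (snd z)) E \<partial>PY)"
  proof (rule Bochner_Integration.integral_cong[OF refl])
    fix z assume "z \<in> space PY"
    then have z: "z \<in> space (mu \<Otimes>\<^sub>M SY)"
      by (simp add: space_joint[OF prob_space_mu K'_kernel])
    have "(\<integral>w. indicator E (snd w) * a (fst w) \<partial>?N z) = (\<integral>x. indicator E x * a z \<partial>g (snd z))"
      by (subst integral_distr[OF measurable_garble_pair[OF z]]) simp_all
    also have "\<dots> = a z * measure (g (snd z)) E"
      using garbled_signal_measure[OF z] by (simp add: prob_space.finite_measure finite_measure.emeasure_eq_measure)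
    finally show "(\<integral>w. indicator E (snd w) * a (fst w) \<partial>?N z) = a z * measure (g (snd z)) E" .
  qed
  finally show ?thesis .
qed

lemma integral_joint_eq_coupling_fst:
  fixes f :: "real \<times> 'y \<Rightarrow> real"
  assumes "f \<in> borel_measurable (mu \<Otimes>\<^sub>M SY)"
  shows "(\<integral>z. f z \<partial>PY) = (\<integral>w. f (fst w) \<partial>coupling)"
proof -
  have "fst \<in> coupling \<rightarrow>\<^sub>M mu \<Otimes>\<^sub>M SY"
    by (simp add: measurable_cong_sets[OF sets_coupling refl])
  then show ?thesis
    by (subst distr_coupling_fst[symmetric]) (rule integral_distr[OF _ assms])
qed

lemma integral_joint_eq_coupling_garbled:
  fixes f :: "real \<times> 'x \<Rightarrow> real"
  assumes "f \<in> borel_measurable (mu \<Otimes>\<^sub>M SX)"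
  shows "(\<integral>z. f z \<partial>PX) = (\<integral>w. f (fst (fst w), snd w) \<partial>coupling)"
proof -
  have "(\<lambda>w. (fst (fst w), snd w)) \<in> coupling \<rightarrow>\<^sub>M mu \<Otimes>\<^sub>M SX"
    by (simp add: measurable_cong_sets[OF sets_coupling refl])
  then show ?thesis
    by (subst distr_coupling_quality_garbled_signal[symmetric]) (rule integral_distr[OF _ assms])
qed

lemma integrable_coupling_bounded:
  fixes f :: "(real \<times> 'y) \<times> 'x \<Rightarrow> real"
  assumes "f \<in> borel_measurable ((mu \<Otimes>\<^sub>M SY) \<Otimes>\<^sub>M SX)" and "\<And>w. \<bar>f w\<bar> \<le> B"
  shows "integrable coupling f"
proof -
  interpret prob_space coupling by (rule prob_space_coupling)
  show ?thesis
    using assms by (intro integrable_real_bounded) (simp_all add: measurable_cong_sets[OF sets_coupling refl])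
qed

context
  fixes a b :: real and hX :: "real \<times> 'x \<Rightarrow> real" and hY :: "real \<times> 'y \<Rightarrow> real"
  assumes id_measurable: "(\<lambda>q. q) \<in> borel_measurable mu" and space_mu: "space mu \<subseteq> {a..b}"
    and hX_measurable_signal: "hX \<in> borel_measurable (vimage_algebra (space (mu \<Otimes>\<^sub>M SX)) snd SX)"
    and hX_measurable[measurable]: "hX \<in> borel_measurable (mu \<Otimes>\<^sub>M SX)"
    and hY_measurable[measurable]: "hY \<in> borel_measurable (mu \<Otimes>\<^sub>M SY)"
    and hX_bounded: "\<And>z. hX z \<in> {a..b}" and hY_bounded: "\<And>z. hY z \<in> {a..b}"
    and hX_post_mean: "\<And>\<psi> B. \<psi> \<in> borel_measurable SX \<Longrightarrow> (\<And>x. x \<in> space SX \<Longrightarrow> \<bar>\<psi> x\<bar> \<le> B) \<Longrightarrow>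
       (\<integral>z. \<psi> (snd z) * hX z \<partial>PX) = (\<integral>z. \<psi> (snd z) * fst z \<partial>PX)"
    and hY_post_mean: "\<And>\<psi> B. \<psi> \<in> borel_measurable SY \<Longrightarrow> (\<And>y. y \<in> space SY \<Longrightarrow> \<bar>\<psi> y\<bar> \<le> B) \<Longrightarrow>
       (\<integral>z. \<psi> (snd z) * hY z \<partial>PY) = (\<integral>z. \<psi> (snd z) * fst z \<partial>PY)"
begin

text \<open>For an event of x, integrating q over the coupling is the same as integrating the
  conditional probability of the event given y against q, hence against E[q | y].\<close>

lemma cond_exp_coupling_post_mean:
  "AE w in coupling. real_cond_exp coupling (vimage_algebra (space ((mu \<Otimes>\<^sub>M SY) \<Otimes>\<^sub>M SX)) snd SX)
     (\<lambda>w. hY (fst w)) w = hX (fst (fst w), snd w)"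
proof (rule sigma_finite_subalgebra.real_cond_exp_charact)
  let ?G = "vimage_algebra (space ((mu \<Otimes>\<^sub>M SY) \<Otimes>\<^sub>M SX)) snd SX"
  show "sigma_finite_subalgebra coupling ?G"
    using prob_space_coupling sets_coupling by (rule sigma_finite_subalgebra_vimage_snd)
  have bound: "\<bar>t\<bar> \<le> \<bar>a\<bar> + \<bar>b\<bar>" if "t \<in> {a..b}" for t
    using that by auto
  show "integrable coupling (\<lambda>w. hY (fst w))" "integrable coupling (\<lambda>w. hX (fst (fst w), snd w))"
    using bound[OF hY_bounded] bound[OF hX_bounded] by (auto intro!: integrable_coupling_bounded)
  have "(\<lambda>w. (fst (fst w), snd w)) \<in> ?G \<rightarrow>\<^sub>M vimage_algebra (space (mu \<Otimes>\<^sub>M SX)) snd SX"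
  proof (rule measurable_vimage_algebra2)
    show "(\<lambda>w. snd (fst (fst w), snd w)) \<in> ?G \<rightarrow>\<^sub>M SX"
      using measurable_snd_vimage_snd by simp
  qed (auto simp: space_pair_measure)
  then show "(\<lambda>w. hX (fst (fst w), snd w)) \<in> borel_measurable ?G"
    using hX_measurable_signal by (rule measurable_compose)
  fix S assume "S \<in> sets ?G"
  then obtain E where E[measurable]: "E \<in> sets SX" and S: "S = snd -` E \<inter> space ((mu \<Otimes>\<^sub>M SY) \<Otimes>\<^sub>M SX)"
    by (subst (asm) sets_vimage_algebra2) (auto simp: space_pair_measure)
  have set_integral: "(\<integral>w\<in>S. f w \<partial>coupling) = (\<integral>w. indicator E (snd w) * f w \<partial>coupling)"
    for f :: "_ \<Rightarrow> real"
    unfolding set_lebesgue_integral_def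
    by (rule Bochner_Integration.integral_cong) (auto simp: S space_coupling indicator_def)
  have garble_bound: "\<bar>measure (g y) E\<bar> \<le> 1" if "y \<in> space SY" for y
    using measurable_space[OF g_kernel that] by (simp add: space_prob_algebra prob_space.prob_le_1)
  have fst_bound: "\<bar>fst z\<bar> \<le> \<bar>a\<bar> + \<bar>b\<bar>" if "z \<in> space (mu \<Otimes>\<^sub>M SY)" for z
    using that space_mu bound by (force simp: space_pair_measure)
  have [measurable]: "fst \<in> borel_measurable (mu \<Otimes>\<^sub>M SY)" "fst \<in> borel_measurable (mu \<Otimes>\<^sub>M SX)"
    using borel_measurable_fst_pair[OF id_measurable] by auto
  have "(\<integral>w\<in>S. hY (fst w) \<partial>coupling) = (\<integral>z. hY z * measure (g (snd z)) E \<partial>PY)"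
    unfolding set_integral using bound[OF hY_bounded] by (intro integral_coupling_signal_event) auto
  also have "\<dots> = (\<integral>z. measure (g (snd z)) E * fst z \<partial>PY)"
    using hY_post_mean[of "\<lambda>y. measure (g y) E", OF _ garble_bound] by (simp add: mult.commute)
  also have "\<dots> = (\<integral>w. indicator E (snd w) * fst (fst w) \<partial>coupling)"
    using integral_coupling_signal_event[of fst, OF _ fst_bound E] by (simp add: mult.commute)
  also have "\<dots> = (\<integral>z. indicator E (snd z) * fst z \<partial>PX)"
    by (subst integral_joint_eq_coupling_garbled) simp_all
  also have "\<dots> = (\<integral>z. indicator E (snd z) * hX z \<partial>PX)"
    by (rule hX_post_mean[symmetric, where B=1]) auto
  also have "\<dots> = (\<integral>w\<in>S. hX (fst (fst w), snd w) \<partial>coupling)"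
    unfolding set_integral by (subst integral_joint_eq_coupling_garbled) simp_all
  finally show "(\<integral>w\<in>S. hY (fst w) \<partial>coupling) = (\<integral>w\<in>S. hX (fst (fst w), snd w) \<partial>coupling)" .
qed

lemma integral_convex_post_mean_version_le:
  assumes "convex_on UNIV W" and [measurable]: "W \<in> borel_measurable borel"
    and W_bounded: "\<And>t. t \<in> {a..b} \<Longrightarrow> \<bar>W t\<bar> \<le> D"
  shows "(\<integral>z. W (hX z) \<partial>PX) \<le> (\<integral>z. W (hY z) \<partial>PY)"
proof -
  interpret sigma_finite_subalgebra coupling "vimage_algebra (space ((mu \<Otimes>\<^sub>M SY) \<Otimes>\<^sub>M SX)) snd SX"
    using prob_space_coupling sets_coupling by (rule sigma_finite_subalgebra_vimage_snd)
  have "(\<integral>z. W (hX z) \<partial>PX) = (\<integral>w. W (hX (fst (fst w), snd w)) \<partial>coupling)"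
    by (rule integral_joint_eq_coupling_garbled) simp
  also have "\<dots> \<le> (\<integral>w. W (hY (fst w)) \<partial>coupling)"
  proof (rule integral_convex_cond_exp_le[OF _ cond_exp_coupling_post_mean assms(1,2)])
    have "\<bar>hY z\<bar> \<le> \<bar>a\<bar> + \<bar>b\<bar>" for z
      using hY_bounded[of z] by auto
    then show "integrable coupling (\<lambda>w. hY (fst w))"
      by (intro integrable_coupling_bounded) auto
    show "integrable coupling (\<lambda>w. W (hY (fst w)))" "integrable coupling (\<lambda>w. W (hX (fst (fst w), snd w)))"
      using W_bounded[OF hY_bounded] W_bounded[OF hX_bounded] by (auto intro!: integrable_coupling_bounded)
  qed
  also have "\<dots> = (\<integral>z. W (hY z) \<partial>PY)"
    by (rule integral_joint_eq_coupling_fst[symmetric]) simp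
  finally show ?thesis .
qed

end

theorem integral_convex_post_mean_le:
  assumes id_measurable: "(\<lambda>q. q) \<in> borel_measurable mu" and space_mu: "space mu \<subseteq> {a..b}"
    and convex: "convex_on UNIV W"
  shows "(\<integral>z. W (post_mean mu SX K z) \<partial>PX) \<le> (\<integral>z. W (post_mean mu SY K' z) \<partial>PY)"
proof -
  have continuous: "continuous_on UNIV W"
    using convex_on_continuous[OF open_UNIV convex] .
  then have W_measurable[measurable]: "W \<in> borel_measurable borel"
    by (rule borel_measurable_continuous_onI)
  have "bounded (W ` {a..b})"
    by (intro compact_imp_bounded compact_continuous_image continuous_on_subset[OF continuous]) auto
  then obtain D where "\<forall>t\<in>{a..b}. \<bar>W t\<bar> \<le> D"
    unfolding bounded_iff by auto
  then have W_bounded: "\<And>t. t \<in> {a..b} \<Longrightarrow> \<bar>W t\<bar> \<le> D"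
    by blast
  obtain hX where hX: "hX \<in> borel_measurable (vimage_algebra (space (mu \<Otimes>\<^sub>M SX)) snd SX)"
    "hX \<in> borel_measurable (mu \<Otimes>\<^sub>M SX)" "\<And>z. hX z \<in> {a..b}"
    "AE z in PX. post_mean mu SX K z = hX z"
    "\<And>\<psi> B. \<psi> \<in> borel_measurable SX \<Longrightarrow> (\<And>y. y \<in> space SX \<Longrightarrow> \<bar>\<psi> y\<bar> \<le> B) \<Longrightarrow>
       (\<integral>z. \<psi> (snd z) * hX z \<partial>PX) = (\<integral>z. \<psi> (snd z) * fst z \<partial>PX)"
    using post_mean_bounded_version[OF prob_space_mu K_kernel id_measurable space_mu] by blast
  obtain hY where hY: "hY \<in> borel_measurable (vimage_algebra (space (mu \<Otimes>\<^sub>M SY)) snd SY)"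
    "hY \<in> borel_measurable (mu \<Otimes>\<^sub>M SY)" "\<And>z. hY z \<in> {a..b}"
    "AE z in PY. post_mean mu SY K' z = hY z"
    "\<And>\<psi> B. \<psi> \<in> borel_measurable SY \<Longrightarrow> (\<And>y. y \<in> space SY \<Longrightarrow> \<bar>\<psi> y\<bar> \<le> B) \<Longrightarrow>
       (\<integral>z. \<psi> (snd z) * hY z \<partial>PY) = (\<integral>z. \<psi> (snd z) * fst z \<partial>PY)"
    using post_mean_bounded_version[OF prob_space_mu K'_kernel id_measurable space_mu] by blast
  have "(\<integral>z. W (post_mean mu SX K z) \<partial>PX) = (\<integral>z. W (hX z) \<partial>PX)"
    using W_measurable hX(2,4) by (rule integral_comp_post_mean_cong_AE[OF prob_space_mu K_kernel])
  also have "\<dots> \<le> (\<integral>z. W (hY z) \<partial>PY)"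
    by (rule integral_convex_post_mean_version_le[OF id_measurable space_mu hX(1,2) hY(2) hX(3) hY(3)
          hX(5) hY(5) convex W_measurable W_bounded])
  also have "\<dots> = (\<integral>z. W (post_mean mu SY K' z) \<partial>PY)"
    using W_measurable hY(2,4) by (rule integral_comp_post_mean_cong_AE[OF prob_space_mu K'_kernel, symmetric])
  finally show ?thesis .
qed

end

lemma garbling_if_blackwell_more_informative:
  assumes "prob_space mu" and "info_structure mu SX K" and "info_structure mu SY K'"
    and "blackwell_more_informative (space mu) SY K' SX K"
  obtains g where "garbling mu SX SY K K' g"
proof -
  obtain g where "g \<in> SY \<rightarrow>\<^sub>M prob_algebra SX" and "\<forall>q\<in>space mu. K q = K' q \<bind> g"
    using assms(4) unfolding blackwell_more_informative_def by blast
  with assms(1-3) have "garbling mu SX SY K K' g"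
    unfolding info_structure_def by (intro garbling.intro) auto
  then show ?thesis ..
qed

lemma seller_payoff_eq_integral_max_profit:
  assumes mu: "prob_space mu" and K: "K \<in> mu \<rightarrow>\<^sub>M prob_algebra S"
    and id_measurable: "(\<lambda>q. q) \<in> borel_measurable mu" and space_mu: "space mu \<subseteq> {a..b}"
    and value_measurable: "(\<lambda>q. profit F c q (opt_price F c q)) \<in> borel_measurable borel"
    and value_eq: "\<And>q. q \<in> {a..b} \<Longrightarrow> profit F c q (opt_price F c q) = max_profit F c q"
    and F: "continuous_on {0..1} F"
  shows "seller_payoff F c mu S K = (\<integral>z. max_profit F c (post_mean mu S K z) \<partial>joint mu S K)"
proof -
  have post_mean[measurable]: "post_mean mu S K \<in> borel_measurable (joint mu S K)"
    unfolding post_mean_def by (rule borel_measurable_cond_exp2)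
  have [measurable]: "max_profit F c \<in> borel_measurable borel"
    using continuous_on_max_profit[OF F] by (rule borel_measurable_continuous_onI)
  have "seller_payoff F c mu S K
      = (\<integral>z. profit F c (post_mean mu S K z) (opt_price F c (post_mean mu S K z)) \<partial>joint mu S K)"
    unfolding seller_payoff_def post_mean_dist_def by (rule integral_distr[OF post_mean value_measurable])
  also have "\<dots> = (\<integral>z. max_profit F c (post_mean mu S K z) \<partial>joint mu S K)"
    using AE_post_mean_in_interval[OF mu K id_measurable space_mu] value_measurable
    by (intro integral_cong_AE) (auto simp: value_eq)
  finally show ?thesis .
qed

text \<open>The value function is only pinned down on Q (outside it opt_price is an unspecified THE-term),
  so it need not be Borel; then the Bochner integrals defining both payoffs are 0.\<close>

lemma seller_payoff_eq_0_if_not_measurable: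
  assumes "(\<lambda>q. profit F c q (opt_price F c q)) \<notin> borel_measurable borel"
  shows "seller_payoff F c mu S K = 0"
proof -
  have "\<not> integrable (post_mean_dist mu S K) (\<lambda>q. profit F c q (opt_price F c q))"
    using assms borel_measurable_integrable
    by (auto simp: post_mean_dist_def measurable_cong_sets[OF sets_distr refl])
  then show ?thesis
    unfolding seller_payoff_def by (rule not_integrable_integral_eq)
qed

theorem proposition1:
  fixes ql qh c :: real and F f :: "real \<Rightarrow> real" and mu :: "real measure"
    and SX :: "'x measure" and K :: "real \<Rightarrow> 'x measure"
    and SY :: "'y measure" and K' :: "real \<Rightarrow> 'y measure"
  assumes q_pos: "0 < ql" and q_lt: "ql < qh"
    and c_pos: "0 < c" and c_lt: "c < ql"
    \<comment> \<open>F is the cdf of a distribution on [0,1] with support [0,1] and density f\<close>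
    and f_int: "f integrable_on {0..1}" and f_tot: "integral {0..1} f = 1"
    and F_below: "\<And>x. x < 0 \<Longrightarrow> F x = 0"
    and F_dens: "\<And>x. x \<in> {0..1} \<Longrightarrow> F x = integral {0..x} f"
    and F_above: "\<And>x. 1 < x \<Longrightarrow> F x = 1"
    and f_pos: "\<And>v. v \<in> {0<..<1} \<Longrightarrow> f v > 0"
    and f_C2: "\<exists>f1 f2. (\<forall>v\<in>{0<..<1}. (f has_real_derivative f1 v) (at v)
                                 \<and> (f1 has_real_derivative f2 v) (at v))
                      \<and> continuous_on {0<..<1} f2"
    \<comment> \<open>regularity: psi' > 0 whenever psi > 0\<close>
    and regular: "\<And>v. v \<in> {0<..<1} \<Longrightarrow> virt_val F f v > 0 \<Longrightarrow> deriv (virt_val F f) v > 0"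
    \<comment> \<open>p(q) is the unique maximiser (as asserted in the setting)\<close>
    and p_unique: "\<And>q. q \<in> {ql..qh} \<Longrightarrow> \<exists>!p. \<forall>p'. profit F c q p' \<le> profit F c q p"
    \<comment> \<open>prior on Q with support Q\<close>
    and mu_prob: "prob_space mu"
    and mu_sets: "sets mu = sets (restrict_space borel {ql..qh})"
    and mu_supp: "\<And>U. open U \<Longrightarrow> U \<inter> {ql..qh} \<noteq> {} \<Longrightarrow> emeasure mu (U \<inter> {ql..qh}) > 0"
    \<comment> \<open>the two information structures of Seller\<close>
    and pi_is: "info_structure mu SX K"
    and K'_is: "info_structure mu SY K'"
    and more_inf: "blackwell_more_informative {ql..qh} SY K' SX K"
  shows "seller_payoff F c mu SX K \<le> seller_payoff F c mu SY K'"
proof (cases "(\<lambda>q. profit F c q (opt_price F c q)) \<in> borel_measurable borel")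
  case True
  have space_mu: "space mu = {ql..qh}"
    using sets_eq_imp_space_eq[OF mu_sets] by simp
  then have space_sub: "space mu \<subseteq> {ql..qh}"
    by simp
  have id_measurable: "(\<lambda>q. q) \<in> borel_measurable mu"
    by (simp add: measurable_cong_sets[OF mu_sets refl] measurable_restrict_space1)
  obtain g where "garbling mu SX SY K K' g"
    using garbling_if_blackwell_more_informative[OF mu_prob pi_is K'_is] more_inf space_mu by metis
  then interpret garbling mu SX SY K K' g .
  have F: "continuous_on {0..1} F"
    using indefinite_integral_continuous_1[OF f_int] by (rule continuous_on_eq) (simp add: F_dens)
  have F0: "F 0 = 0" and F1: "F 1 = 1"
    using F_dens[of 0] F_dens[of 1] f_tot by simp_all
  have value_eq: "profit F c q (opt_price F c q) = max_profit F c q" if "q \<in> {ql..qh}" for q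
    using q_pos that p_unique[OF that]
    by (intro profit_opt_price_eq_max_profit[OF F F0 F1 F_below F_above]) auto
  have "seller_payoff F c mu SX K = (\<integral>z. max_profit F c (post_mean mu SX K z) \<partial>joint mu SX K)"
    by (rule seller_payoff_eq_integral_max_profit[OF mu_prob K_kernel id_measurable space_sub True value_eq F])
  also have "\<dots> \<le> (\<integral>z. max_profit F c (post_mean mu SY K' z) \<partial>joint mu SY K')"
    by (rule integral_convex_post_mean_le[OF id_measurable space_sub convex_on_max_profit[OF F]])
  also have "\<dots> = seller_payoff F c mu SY K'"
    by (rule seller_payoff_eq_integral_max_profit[OF mu_prob K'_kernel id_measurable space_sub True value_eq F, symmetric])
  finally show ?thesis .
next
  case False
  then show ?thesis
    by (simp add: seller_payoff_eq_0_if_not_measurable)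
qed

end
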